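(* Let $R$ be a commutative ring, $\vartheta$ any one of the four types (left, right, pre-two-sided, two-sided), and $\mathcal A$ an $R$-algebra which is integral over $R$ and in which every element is either invertible or nilpotent. Then $\mathcal A$ is a $\vartheta$-quasi-stable $R$-algebra.
   Context: Algebras are associative and unital. $\mathcal A$ is integral over $R$ if every element is a root of a monic polynomial with coefficients in $R$. An $R$-submodule $V$ of $\mathcal A$ is a left (resp. right) Mathieu subspace if whenever $a^m\in V$ for all $m\ge1$, then for every $b\in\mathcal A$, $ba^m\in V$ (resp. $a^mb\in V$) for all sufficiently large $m$; pre-two-sided if both left and right; two-sided if whenever $a^m\in V$ for all $m\ge1$, for all $b,c\in\mathcal A$, $ba^mc\in V$ for all sufficiently large $m$. $\mathcal A$ is $\vartheta$-quasi-stable if every $R$-submodule $V$ of $\mathcal A$ with $1\notin V$ is a $\vartheta$-Mathieu subspace of $\mathcal A$. *)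

theory Defs
  imports Main
begin

text \<open>An (associative, unital) R-algebra structure on a ring 'a is given by its
structure map phi : R -> A, a unital ring homomorphism whose image is central.\<close>
definition algebra_map :: "('r::comm_ring_1 \<Rightarrow> 'a::ring_1) \<Rightarrow> bool" where
  "algebra_map phi \<longleftrightarrow>
     phi 1 = 1 \<and> (\<forall>x y. phi (x + y) = phi x + phi y) \<and>
     (\<forall>x y. phi (x * y) = phi x * phi y) \<and>
     (\<forall>r a. phi r * a = a * phi r)"

definition r_submodule :: "('r::comm_ring_1 \<Rightarrow> 'a::ring_1) \<Rightarrow> 'a set \<Rightarrow> bool" where
  "r_submodule phi V \<longleftrightarrow>
     0 \<in> V \<and> (\<forall>u\<in>V. \<forall>v\<in>V. u + v \<in> V) \<and> (\<forall>r. \<forall>v\<in>V. phi r * v \<in> V)"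

definition integral_over :: "('r::comm_ring_1 \<Rightarrow> 'a::ring_1) \<Rightarrow> bool" where
  "integral_over phi \<longleftrightarrow>
     (\<forall>a::'a. \<exists>(n::nat) (c::nat \<Rightarrow> 'r). a ^ n + (\<Sum>i<n. phi (c i) * a ^ i) = 0)"

definition invertible_elem :: "'a::ring_1 \<Rightarrow> bool" where
  "invertible_elem a \<longleftrightarrow> (\<exists>b. a * b = 1 \<and> b * a = 1)"

definition nilpotent_elem :: "'a::ring_1 \<Rightarrow> bool" where
  "nilpotent_elem a \<longleftrightarrow> (\<exists>n::nat. a ^ n = 0)"

datatype mathieu_type = LeftM | RightM | PreTwoSidedM | TwoSidedM

definition left_mathieu :: "'a::ring_1 set \<Rightarrow> bool" where
  "left_mathieu V \<longleftrightarrow> (\<forall>a. (\<forall>m\<ge>1. a ^ m \<in> V) \<longrightarrow>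
      (\<forall>b. \<exists>N. \<forall>m\<ge>N. b * a ^ m \<in> V))"

definition right_mathieu :: "'a::ring_1 set \<Rightarrow> bool" where
  "right_mathieu V \<longleftrightarrow> (\<forall>a. (\<forall>m\<ge>1. a ^ m \<in> V) \<longrightarrow>
      (\<forall>b. \<exists>N. \<forall>m\<ge>N. a ^ m * b \<in> V))"

definition two_sided_mathieu :: "'a::ring_1 set \<Rightarrow> bool" where
  "two_sided_mathieu V \<longleftrightarrow> (\<forall>a. (\<forall>m\<ge>1. a ^ m \<in> V) \<longrightarrow>
      (\<forall>b c. \<exists>N. \<forall>m\<ge>N. b * a ^ m * c \<in> V))"

fun mathieu :: "mathieu_type \<Rightarrow> 'a::ring_1 set \<Rightarrow> bool" where
  "mathieu LeftM V = left_mathieu V"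
| "mathieu RightM V = right_mathieu V"
| "mathieu PreTwoSidedM V = (left_mathieu V \<and> right_mathieu V)"
| "mathieu TwoSidedM V = two_sided_mathieu V"

definition quasi_stable :: "mathieu_type \<Rightarrow> ('r::comm_ring_1 \<Rightarrow> 'a::ring_1) \<Rightarrow> bool" where
  "quasi_stable \<theta> phi \<longleftrightarrow> (\<forall>V. r_submodule phi V \<and> 1 \<notin> V \<longrightarrow> mathieu \<theta> V)"

end

theory Submission
  imports Defs
begin

text \<open>If every power of some \<open>a\<close> lies in \<open>V\<close> then \<open>a\<close> cannot be invertible: multiplying a
monic equation \<open>b\<^sup>n + \<Sum>\<^sub>i<\<^sub>n c\<^sub>i b\<^sup>i = 0\<close> for \<open>b = a\<inverse>\<close> by \<open>a\<^sup>n\<close> writes \<open>1\<close> as an \<open>R\<close>-linear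
combination of \<open>a, \<dots>, a\<^sup>n\<close>, so \<open>1 \<in> V\<close>. Hence \<open>a\<close> is nilpotent, its powers are eventually \<open>0 \<in> V\<close>,
and every Mathieu condition holds trivially.\<close>

lemma algebra_map_0:
  assumes "algebra_map phi"
  shows "phi 0 = 0"
proof -
  have "phi 0 = phi 0 + phi 0"
    using assms unfolding algebra_map_def by (metis add_0)
  then show ?thesis by simp
qed

lemma algebra_map_minus:
  assumes "algebra_map phi"
  shows "phi (- c) = - phi c"
proof -
  have "phi c + phi (- c) = 0"
    using assms algebra_map_0[OF assms] unfolding algebra_map_def by (metis add.right_inverse)
  then show ?thesis by (simp add: eq_neg_iff_add_eq_0 add.commute)
qed

lemma r_submodule_sum_mem:
  assumes "r_submodule phi V" and "finite S" and "\<And>i. i \<in> S \<Longrightarrow> f i \<in> V"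
  shows "sum f S \<in> V"
  using assms(2,3)
  by (induction S rule: finite_induct) (use assms(1) in \<open>auto simp: r_submodule_def\<close>)

lemma power_mult_central_mult_right_inverse_power:
  fixes a b z :: "'a::ring_1"
  assumes "a * b = 1" and "i \<le> n" and central: "\<And>x. z * x = x * z"
  shows "a ^ n * (z * b ^ i) = z * a ^ (n - i)"
proof -
  have "a ^ n * (z * b ^ i) = (a ^ (n - i) * a ^ i) * z * b ^ i"
    using \<open>i \<le> n\<close> by (simp add: power_add[symmetric] mult.assoc)
  also have "\<dots> = z * (a ^ (n - i) * (a ^ i * b ^ i))"
    by (metis central mult.assoc)
  also have "\<dots> = z * a ^ (n - i)"
    using left_right_inverse_power[OF \<open>a * b = 1\<close>] by simp
  finally show ?thesis .
qed

lemma one_mem_if_invertible_powers_mem: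
  fixes phi :: "'r::comm_ring_1 \<Rightarrow> 'a::ring_1"
  assumes am: "algebra_map phi" and "integral_over phi" and sm: "r_submodule phi V"
    and "invertible_elem a" and powers: "\<forall>m\<ge>1. a ^ m \<in> V"
  shows "1 \<in> V"
proof -
  obtain b where ab: "a * b = 1"
    using \<open>invertible_elem a\<close> unfolding invertible_elem_def by blast
  obtain n c where monic: "b ^ n + (\<Sum>i<n. phi (c i) * b ^ i) = 0"
    using \<open>integral_over phi\<close> unfolding integral_over_def by blast
  have central: "\<And>r x. phi r * x = x * phi r"
    using am unfolding algebra_map_def by blast
  have "0 = a ^ n * (b ^ n + (\<Sum>i<n. phi (c i) * b ^ i))"
    by (simp add: monic)
  also have "\<dots> = 1 + (\<Sum>i<n. phi (c i) * a ^ (n - i))"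
    using power_mult_central_mult_right_inverse_power[OF ab _ central]
    by (simp add: distrib_left sum_distrib_left left_right_inverse_power[OF ab])
  finally have "1 = (\<Sum>i<n. phi (- c i) * a ^ (n - i))"
    by (simp add: algebra_map_minus[OF am] sum_negf eq_neg_iff_add_eq_0)
  also have "\<dots> \<in> V"
    by (rule r_submodule_sum_mem[OF sm]) (use sm powers in \<open>auto simp: r_submodule_def\<close>)
  finally show ?thesis .
qed

lemma nilpotent_elem_eventually_power_zero:
  assumes "nilpotent_elem a"
  shows "\<exists>N. \<forall>m\<ge>N. a ^ m = 0"
proof -
  obtain n where "a ^ n = 0"
    using assms unfolding nilpotent_elem_def by blast
  then have "\<forall>m\<ge>n. a ^ m = 0"
    by (auto simp: le_iff_add power_add)
  then show ?thesis by blast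
qed

lemma mathieu_if_powers_in_eventually_zero:
  assumes "0 \<in> V" and vanish: "\<And>a. \<forall>m\<ge>1. a ^ m \<in> V \<Longrightarrow> \<exists>N. \<forall>m\<ge>N. a ^ m = 0"
  shows "mathieu \<theta> V"
proof -
  have "two_sided_mathieu V" "left_mathieu V" "right_mathieu V"
    unfolding two_sided_mathieu_def left_mathieu_def right_mathieu_def
    by (metis vanish \<open>0 \<in> V\<close> mult_zero_left mult_zero_right)+
  then show ?thesis by (cases \<theta>) auto
qed

theorem proposition7p4:
  fixes phi :: "'r::comm_ring_1 \<Rightarrow> 'a::ring_1" and \<theta> :: mathieu_type
  assumes "algebra_map phi"
    and "integral_over phi"
    and "\<forall>a::'a. invertible_elem a \<or> nilpotent_elem a"
  shows "quasi_stable \<theta> phi"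
  unfolding quasi_stable_def
proof (intro allI impI)
  fix V :: "'a set"
  assume V: "r_submodule phi V \<and> 1 \<notin> V"
  have "\<exists>N. \<forall>m\<ge>N. a ^ m = 0" if "\<forall>m\<ge>1. a ^ m \<in> V" for a
    using assms V that one_mem_if_invertible_powers_mem nilpotent_elem_eventually_power_zero
    by blast
  moreover have "0 \<in> V"
    using V unfolding r_submodule_def by blast
  ultimately show "mathieu \<theta> V"
    by (intro mathieu_if_powers_in_eventually_zero)
qed

end
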